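(* Let $G=\prod_{i=1}^tK[a_i,b_i]$ with $2\le b_1\le\cdots\le b_t$. Let $S$ be an irredundant set in $G$ and let $T\subseteq\mathrm{pn}[S]$ be chosen so that each vertex of $S$ has exactly one private neighbor in $T$. If $v_1,v_2\in T$ are distinct with $p(v_1)=p(v_2)$, then $v_1,v_2\in\mathrm{Lon}(S)$.
   Context: $K[a,b]$ is the balanced complete $b$-partite graph with $b$ parts of size $a$. Label the vertices of $K[a_i,b_i]$ by $\{0,\dots,a_ib_i-1\}$ so that two are adjacent iff they are not congruent mod $b_i$. A vertex $v$ of the direct product $\prod_i K[a_i,b_i]$ is a tuple $(v(1),\dots,v(t))$, and $p(v)=(v(1)\bmod b_1,\dots,v(t)\bmod b_t)$; $u,v$ are adjacent iff $p(u),p(v)$ differ in every coordinate. For $S\subseteq V(G)$, $v\in S$: $\mathrm{pn}[v;S]=N[v]\setminus N[S\setminus\{v\}]$ (closed neighborhoods), $\mathrm{pn}[S]=\bigcup_{v\in S}\mathrm{pn}[v;S]$; $S$ is irredundant if every $\mathrm{pn}[v;S]$ is nonempty. $\mathrm{Lon}(S)$ is the set of vertices of $S$ isolated in $G[S]$. *)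

theory Defs
  imports Main
begin

text \<open>The direct product G of K[a_i,b_i], i = 1..t. Vertices are functions
  v :: nat => nat with v i < a i * b i for i in {1..t} and v i = 0 outside {1..t}.\<close>

definition prodV :: "nat \<Rightarrow> (nat \<Rightarrow> nat) \<Rightarrow> (nat \<Rightarrow> nat) \<Rightarrow> (nat \<Rightarrow> nat) set" where
  "prodV t a b = {v. (\<forall>i\<in>{1..t}. v i < a i * b i) \<and> (\<forall>i. i \<notin> {1..t} \<longrightarrow> v i = 0)}"

definition pmap :: "nat \<Rightarrow> (nat \<Rightarrow> nat) \<Rightarrow> (nat \<Rightarrow> nat) \<Rightarrow> (nat \<Rightarrow> nat)" where
  "pmap t b v = (\<lambda>i. if i \<in> {1..t} then v i mod b i else 0)"

definition padj :: "nat \<Rightarrow> (nat \<Rightarrow> nat) \<Rightarrow> (nat \<Rightarrow> nat) \<Rightarrow> (nat \<Rightarrow> nat) \<Rightarrow> bool" where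
  "padj t b u v = (\<forall>i\<in>{1..t}. u i mod b i \<noteq> v i mod b i)"

definition cnbhd :: "nat \<Rightarrow> (nat \<Rightarrow> nat) \<Rightarrow> (nat \<Rightarrow> nat) \<Rightarrow> (nat \<Rightarrow> nat) \<Rightarrow> (nat \<Rightarrow> nat) set" where
  "cnbhd t a b v = {u \<in> prodV t a b. u = v \<or> padj t b u v}"

definition cnbhd_set :: "nat \<Rightarrow> (nat \<Rightarrow> nat) \<Rightarrow> (nat \<Rightarrow> nat) \<Rightarrow> (nat \<Rightarrow> nat) set \<Rightarrow> (nat \<Rightarrow> nat) set" where
  "cnbhd_set t a b X = (\<Union>x\<in>X. cnbhd t a b x)"

definition pn_v :: "nat \<Rightarrow> (nat \<Rightarrow> nat) \<Rightarrow> (nat \<Rightarrow> nat) \<Rightarrow> (nat \<Rightarrow> nat) set \<Rightarrow> (nat \<Rightarrow> nat) \<Rightarrow> (nat \<Rightarrow> nat) set" where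
  "pn_v t a b S v = cnbhd t a b v - cnbhd_set t a b (S - {v})"

definition pn :: "nat \<Rightarrow> (nat \<Rightarrow> nat) \<Rightarrow> (nat \<Rightarrow> nat) \<Rightarrow> (nat \<Rightarrow> nat) set \<Rightarrow> (nat \<Rightarrow> nat) set" where
  "pn t a b S = (\<Union>v\<in>S. pn_v t a b S v)"

definition irredundant :: "nat \<Rightarrow> (nat \<Rightarrow> nat) \<Rightarrow> (nat \<Rightarrow> nat) \<Rightarrow> (nat \<Rightarrow> nat) set \<Rightarrow> bool" where
  "irredundant t a b S \<longleftrightarrow> S \<subseteq> prodV t a b \<and> (\<forall>v\<in>S. pn_v t a b S v \<noteq> {})"

definition Lon :: "nat \<Rightarrow> (nat \<Rightarrow> nat) \<Rightarrow> (nat \<Rightarrow> nat) set \<Rightarrow> (nat \<Rightarrow> nat) set" where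
  "Lon t b S = {v \<in> S. \<forall>u\<in>S. \<not> padj t b u v}"

end

theory Submission
  imports Defs
begin

text \<open>Vertices with the same image under p are twins: they have the same neighbours.
  Let v1, v2 be private neighbours in T of s1, s2; as each vertex of S owns only one
  vertex of T, s1 \<noteq> s2. If v1 were a neighbour of s1 rather than s1 itself, its twin
  v2 would also be adjacent to s1 \<in> S - {s2}, contradicting privacy. Hence v1 = s1,
  and a vertex of S that is its own private neighbour has no neighbour in S.\<close>

lemma padj_irrefl: "t \<ge> 1 \<Longrightarrow> \<not> padj t b v v"
  unfolding padj_def by (metis atLeastAtMost_iff order_refl)

lemma padj_sym: "padj t b u v = padj t b v u"
  unfolding padj_def by metis

lemma padj_cong_pmap:
  assumes "pmap t b v = pmap t b w"
  shows "padj t b u v = padj t b u w"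
proof -
  have "v i mod b i = w i mod b i" if "i \<in> {1..t}" for i
    using assms that unfolding pmap_def by metis
  then show ?thesis unfolding padj_def by auto
qed

lemma mem_pn_v_iff:
  "x \<in> pn_v t a b S s \<longleftrightarrow>
     x \<in> prodV t a b \<and> (x = s \<or> padj t b x s) \<and>
     (\<forall>u\<in>S - {s}. x \<noteq> u \<and> \<not> padj t b x u)"
  unfolding pn_v_def cnbhd_set_def cnbhd_def by blast

lemma pn_v_owners_distinct:
  assumes "\<forall>s\<in>S. card (pn_v t a b S s \<inter> T) = 1"
    and "s \<in> S" and "x \<in> pn_v t a b S s \<inter> T" and "y \<in> pn_v t a b S s \<inter> T"
  shows "x = y"
  using assms by (metis card_1_singletonE singletonD)

lemma twin_private_neighbour_is_owner:
  assumes "x \<in> pn_v t a b S s\<^sub>1" and "y \<in> pn_v t a b S s\<^sub>2"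
    and "s\<^sub>1 \<in> S" and "s\<^sub>1 \<noteq> s\<^sub>2"
    and twins: "\<And>u. padj t b u x = padj t b u y"
  shows "x = s\<^sub>1"
proof (rule ccontr)
  assume "x \<noteq> s\<^sub>1"
  with assms(1) have "padj t b x s\<^sub>1" by (simp add: mem_pn_v_iff)
  then have "padj t b y s\<^sub>1" using twins padj_sym by metis
  with assms(2-4) show False by (auto simp: mem_pn_v_iff)
qed

lemma self_private_neighbour_in_Lon:
  assumes "t \<ge> 1" and "s \<in> S" and "s \<in> pn_v t a b S s"
  shows "s \<in> Lon t b S"
  using assms padj_irrefl[OF assms(1)] padj_sym
  unfolding Lon_def by (auto simp: mem_pn_v_iff)

lemma private_twin_in_Lon:
  assumes "t \<ge> 1" and "T \<subseteq> pn t a b S"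
    and "\<forall>s\<in>S. card (pn_v t a b S s \<inter> T) = 1"
    and "x \<in> T" and "y \<in> T" and "x \<noteq> y"
    and "\<And>u. padj t b u x = padj t b u y"
  shows "x \<in> Lon t b S"
proof -
  obtain s\<^sub>1 where s\<^sub>1: "s\<^sub>1 \<in> S" "x \<in> pn_v t a b S s\<^sub>1"
    using assms(2,4) unfolding pn_def by blast
  obtain s\<^sub>2 where s\<^sub>2: "s\<^sub>2 \<in> S" "y \<in> pn_v t a b S s\<^sub>2"
    using assms(2,5) unfolding pn_def by blast
  have "s\<^sub>1 \<noteq> s\<^sub>2"
    using pn_v_owners_distinct[OF assms(3) s\<^sub>1(1)] s\<^sub>1 s\<^sub>2 assms(4-6) by blast
  then have "x = s\<^sub>1"
    using twin_private_neighbour_is_owner s\<^sub>1 s\<^sub>2 assms(7) by blast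
  then show ?thesis
    using self_private_neighbour_in_Lon[OF assms(1)] s\<^sub>1 by blast
qed

theorem lemma5p3:
  fixes t :: nat and a b :: "nat \<Rightarrow> nat"
    and S T :: "(nat \<Rightarrow> nat) set" and v1 v2 :: "nat \<Rightarrow> nat"
  assumes "t \<ge> 1"
    and "\<forall>i\<in>{1..t}. a i \<ge> 1"
    and "2 \<le> b 1"
    and "\<forall>i j. 1 \<le> i \<and> i \<le> j \<and> j \<le> t \<longrightarrow> b i \<le> b j"
    and "irredundant t a b S"
    and "T \<subseteq> pn t a b S"
    and "\<forall>s\<in>S. card (pn_v t a b S s \<inter> T) = 1"
    and "v1 \<in> T" and "v2 \<in> T" and "v1 \<noteq> v2"
    and "pmap t b v1 = pmap t b v2"
  shows "v1 \<in> Lon t b S \<and> v2 \<in> Lon t b S"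
proof -
  have twins: "padj t b u v1 = padj t b u v2" for u
    using padj_cong_pmap[OF assms(11)] .
  show ?thesis
    using private_twin_in_Lon[OF assms(1,6,7,8,9,10) twins]
      private_twin_in_Lon[OF assms(1,6,7,9,8) _ twins[symmetric]] assms(10)
    by blast
qed

end
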